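(* Let $X$ be a nonnegative random variable with support $(0,r)$, where $r\in(0,+\infty)$, having finite CIGF $G_X(\alpha,\beta)$ for $(\alpha,\beta)\in D_X$. Assume the moment generating function $M_X(s)=\mathbb{E}(e^{sX})$ satisfies $M_X(s)<+\infty$ for all $s\in(-s_0,s_0)$, for some $s_0>0$. Then: (i) for all $s_1\in(-s_0,0)$, $s_2\in(0,s_0)$ and $(\alpha,\beta)\in D_X$ with $\alpha>0,\beta>0$, $$G_X(\alpha,\beta)\le g(r;\alpha,\beta,\mathbf{s})\,[M_X(s_1)]^\alpha[M_X(s_2)]^\beta;$$ (ii) for all $s_1\in(-s_0,0)$, $s_2\in(0,s_0)$ and $(\alpha,\beta)\in D_X$ with $\alpha<0,\beta<0$, $$G_X(\alpha,\beta)\ge g(r;\alpha,\beta,\mathbf{s})\,[M_X(s_1)]^\alpha[M_X(s_2)]^\beta,$$ where $g(r;\alpha,\beta,\mathbf{s})=\frac{1}{\alpha s_1+\beta s_2}\left[1-e^{-(\alpha s_1+\beta s_2)r}\right]$ if $\alpha s_1+\beta s_2\ne0$, and $g(r;\alpha,\beta,\mathbf{s})=r$ if $\alpha s_1+\beta s_2=0$.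
   Context: For a random variable $X$ with CDF $F$ and survival function $\overline F=1-F$, let $l=\inf\{x:F(x)>0\}$, $r=\sup\{x:\overline F(x)>0\}$. The CIGF of $X$ is $G_X(\alpha,\beta)=\int_l^r [F(x)]^\alpha[\overline F(x)]^\beta\,dx$ on $D_X=\{(\alpha,\beta)\in\mathbb{R}^2: G_X(\alpha,\beta)<\infty\}$. *)

theory Defs
  imports "HOL-Probability.Probability"
begin

definition cdf_rv :: "'a measure \<Rightarrow> ('a \<Rightarrow> real) \<Rightarrow> real \<Rightarrow> real" where
  "cdf_rv M X x = measure M {\<omega> \<in> space M. X \<omega> \<le> x}"

definition surv_rv :: "'a measure \<Rightarrow> ('a \<Rightarrow> real) \<Rightarrow> real \<Rightarrow> real" where
  "surv_rv M X x = 1 - cdf_rv M X x"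

definition left_end :: "'a measure \<Rightarrow> ('a \<Rightarrow> real) \<Rightarrow> real" where
  "left_end M X = Inf {x. cdf_rv M X x > 0}"

definition right_end :: "'a measure \<Rightarrow> ('a \<Rightarrow> real) \<Rightarrow> real" where
  "right_end M X = Sup {x. surv_rv M X x > 0}"

definition CIGF :: "'a measure \<Rightarrow> ('a \<Rightarrow> real) \<Rightarrow> real \<Rightarrow> real \<Rightarrow> real" where
  "CIGF M X a b = (LINT x:{left_end M X<..<right_end M X}|lborel.
      cdf_rv M X x powr a * surv_rv M X x powr b)"

text \<open>D_X: the set of (alpha,beta) for which the (nonnegative) integral is finite.\<close>
definition CIGF_domain :: "'a measure \<Rightarrow> ('a \<Rightarrow> real) \<Rightarrow> (real \<times> real) set" where
  "CIGF_domain M X = {(a, b). set_integrable lborel {left_end M X<..<right_end M X}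
      (\<lambda>x. cdf_rv M X x powr a * surv_rv M X x powr b)}"

definition mgf :: "'a measure \<Rightarrow> ('a \<Rightarrow> real) \<Rightarrow> real \<Rightarrow> real" where
  "mgf M X s = (\<integral>\<omega>. exp (s * X \<omega>) \<partial>M)"

definition g_bound :: "real \<Rightarrow> real \<Rightarrow> real \<Rightarrow> real \<Rightarrow> real \<Rightarrow> real" where
  "g_bound r a b s1 s2 =
     (if a * s1 + b * s2 \<noteq> 0 then (1 - exp (- (a * s1 + b * s2) * r)) / (a * s1 + b * s2)
      else r)"

end

theory Submission
  imports Defs
begin

text \<open>By Markov's inequality for \<open>exp (s X)\<close> (Chernoff's bounds), \<open>F x \<le> M(s1) exp (- s1 x)\<close>
  for \<open>s1 < 0\<close> and \<open>1 - F x \<le> M(s2) exp (- s2 x)\<close> for \<open>s2 > 0\<close>. Raising these to the powers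
  \<open>\<alpha>, \<beta> > 0\<close> and multiplying bounds the integrand of \<open>G\<^sub>X(\<alpha>, \<beta>)\<close> pointwise by
  \<open>M(s1)\<^sup>\<alpha> M(s2)\<^sup>\<beta> exp (- (\<alpha> s1 + \<beta> s2) x)\<close>, whose integral over \<open>(0, r)\<close> is
  \<open>g(r; \<alpha>, \<beta>, s) M(s1)\<^sup>\<alpha> M(s2)\<^sup>\<beta>\<close>. Negative exponents reverse every pointwise inequality,
  provided \<open>F\<close> and \<open>1 - F\<close> are positive on \<open>(0, r)\<close>, which is where the support assumption
  enters.\<close>

lemma set_integrable_exp_Ioo:
  fixes c r :: real
  shows "set_integrable lborel {0<..<r} (\<lambda>x. exp (- c * x))"
proof -
  have "set_integrable lborel {0..r} (\<lambda>x. exp (- c * x))"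
    by (intro borel_integrable_atLeastAtMost' continuous_intros)
  then show ?thesis
    by (rule set_integrable_subset) auto
qed

lemma set_integral_exp_Ioo:
  fixes c r :: real
  assumes "0 < r"
  shows "(LINT x:{0<..<r}|lborel. exp (- c * x)) = (if c \<noteq> 0 then (1 - exp (- c * r)) / c else r)"
proof (cases "c = 0")
  case True
  then show ?thesis
    using assms by (simp add: set_lebesgue_integral_def)
next
  case False
  have "(LINT x:{0<..<r}|lborel. exp (- c * x)) = (LBINT x=ereal 0..ereal r. exp (- c * x))"
    using assms by (subst interval_integral_Ioo) auto
  also have "\<dots> = - exp (- c * r) / c - - exp (- c * 0) / c"
    using assms False
    by (intro interval_integral_FTC_finite continuous_intros)
       (auto intro!: derivative_eq_intros
             simp: has_real_derivative_iff_has_vector_derivative[symmetric])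
  finally show ?thesis
    using False by (simp add: diff_divide_distrib)
qed

lemma set_integral_exp_Ioo_eq_g_bound:
  assumes "0 < r"
  shows "(LINT x:{0<..<r}|lborel. exp (- (a * s1 + b * s2) * x) * C) = g_bound r a b s1 s2 * C"
  unfolding set_integral_mult_left set_integral_exp_Ioo[OF assms] g_bound_def by simp

lemma powr_le_exp_bound:
  fixes u m :: real
  assumes "0 \<le> u" "u \<le> m * exp (- s * x)" "0 < m" "0 \<le> a"
  shows "u powr a \<le> m powr a * exp (- (a * s) * x)"
proof -
  have "u powr a \<le> (m * exp (- s * x)) powr a"
    using assms by (intro powr_mono2) auto
  also have "\<dots> = m powr a * exp (- (a * s) * x)"
    using assms(3) by (simp add: powr_mult exp_powr_real mult_ac)
  finally show ?thesis .
qed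

lemma exp_bound_le_powr_nonpos:
  fixes u m :: real
  assumes "0 < u" "u \<le> m * exp (- s * x)" "0 < m" "a \<le> 0"
  shows "m powr a * exp (- (a * s) * x) \<le> u powr a"
proof -
  have "m powr a * exp (- (a * s) * x) = (m * exp (- s * x)) powr a"
    using assms(3) by (simp add: powr_mult exp_powr_real mult_ac)
  also have "\<dots> \<le> u powr a"
    using assms by (intro powr_mono2') auto
  finally show ?thesis .
qed

lemma exp_linear_combination_split:
  fixes a b s1 s2 x m1 m2 :: real
  shows "exp (- (a * s1 + b * s2) * x) * (m1 * m2) =
    (m1 * exp (- (a * s1) * x)) * (m2 * exp (- (b * s2) * x))"
proof -
  have "- (a * s1 + b * s2) * x = - (a * s1) * x + - (b * s2) * x"
    by algebra
  then show ?thesis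
    by (simp only: exp_add mult_ac)
qed

context prob_space
begin

lemma cdf_rv_eq_cdf_distr:
  assumes [measurable]: "X \<in> borel_measurable M"
  shows "cdf_rv M X x = cdf (distr M borel X) x"
proof -
  have "cdf (distr M borel X) x = measure M (X -` {..x} \<inter> space M)"
    unfolding cdf_def by (subst measure_distr) auto
  also have "X -` {..x} \<inter> space M = {\<omega> \<in> space M. X \<omega> \<le> x}"
    by auto
  finally show ?thesis
    unfolding cdf_rv_def by simp
qed

lemma surv_rv_eq_prob_greater:
  assumes [measurable]: "X \<in> borel_measurable M"
  shows "surv_rv M X x = prob {\<omega> \<in> space M. x < X \<omega>}"
proof -
  have "{\<omega> \<in> space M. x < X \<omega>} = space M - {\<omega> \<in> space M. X \<omega> \<le> x}"
    by auto
  then show ?thesis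
    unfolding surv_rv_def cdf_rv_def by (simp add: prob_compl)
qed

lemma cdf_rv_nonneg: "0 \<le> cdf_rv M X x"
  unfolding cdf_rv_def by simp

lemma surv_rv_nonneg: "0 \<le> surv_rv M X x"
  unfolding surv_rv_def cdf_rv_def by simp

lemma cdf_rv_eq_0_below:
  assumes "AE \<omega> in M. c \<le> X \<omega>" and "y < c"
  shows "cdf_rv M X y = 0"
proof -
  have "AE \<omega> in M. \<not> X \<omega> \<le> y"
    using assms(1) by eventually_elim (use assms(2) in auto)
  then have "emeasure M {\<omega> \<in> space M. X \<omega> \<le> y} = 0"
    by (rule emeasure_eq_0_AE)
  then show ?thesis
    unfolding cdf_rv_def by (simp add: measure_def)
qed

lemma cdf_rv_pos_above_left_end:
  assumes [measurable]: "X \<in> borel_measurable M"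
    and "AE \<omega> in M. c \<le> X \<omega>" and "left_end M X < x"
  shows "0 < cdf_rv M X x"
proof -
  interpret D: real_distribution "distr M borel X"
    by simp
  let ?A = "{y. 0 < cdf_rv M X y}"
  have "eventually (\<lambda>y. 0 < cdf_rv M X y) at_top"
    using D.cdf_lim_at_top_prob unfolding cdf_rv_eq_cdf_distr[OF assms(1), abs_def]
    by (rule order_tendstoD) simp
  then have nonempty: "?A \<noteq> {}"
    by (auto simp: eventually_at_top_linorder)
  have bdd: "bdd_below ?A"
  proof (rule bdd_belowI)
    fix y
    assume "y \<in> ?A"
    then show "c \<le> y"
      using cdf_rv_eq_0_below[OF assms(2), of y] by (cases "y < c") auto
  qed
  obtain y where "0 < cdf_rv M X y" "y < x"
    using assms(3) cInf_less_iff[OF nonempty bdd] unfolding left_end_def by blast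
  then show ?thesis
    using D.cdf_nondecreasing[of y x] by (simp add: cdf_rv_eq_cdf_distr)
qed

lemma surv_rv_pos_below_right_end:
  assumes [measurable]: "X \<in> borel_measurable M"
    and "x < right_end M X"
  shows "0 < surv_rv M X x"
proof -
  interpret D: real_distribution "distr M borel X"
    by simp
  let ?T = "{y. 0 < surv_rv M X y}"
  have "\<exists>y\<in>?T. x < y"
  proof (cases "bdd_above ?T")
    case True
    have "eventually (\<lambda>y. cdf_rv M X y < 1) at_bot"
      using D.cdf_lim_at_bot unfolding cdf_rv_eq_cdf_distr[OF assms(1), abs_def]
      by (rule order_tendstoD) simp
    then have "?T \<noteq> {}"
      by (auto simp: eventually_at_bot_linorder surv_rv_def)
    then show ?thesis
      using assms(2) less_cSup_iff[OF _ True] unfolding right_end_def by blast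
  next
    case False
    then show ?thesis
      unfolding bdd_above_def by (meson not_le)
  qed
  then obtain y where "0 < surv_rv M X y" "x < y"
    by auto
  then show ?thesis
    using D.cdf_nondecreasing[of x y] by (simp add: surv_rv_def cdf_rv_eq_cdf_distr)
qed

lemma mgf_pos:
  assumes "integrable M (\<lambda>\<omega>. exp (s * X \<omega>))"
  shows "0 < mgf M X s"
proof -
  have "0 \<le> mgf M X s"
    unfolding mgf_def by simp
  moreover have "mgf M X s \<noteq> 0"
    unfolding mgf_def using integral_nonneg_eq_0_iff_AE[OF assms] AE_False prob_space by simp
  ultimately show ?thesis
    by simp
qed

lemma cdf_rv_le_mgf:
  assumes [measurable]: "X \<in> borel_measurable M"
    and "integrable M (\<lambda>\<omega>. exp (s * X \<omega>))" and "s < 0"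
  shows "cdf_rv M X x \<le> mgf M X s * exp (- s * x)"
proof -
  have "{\<omega> \<in> space M. X \<omega> \<le> x} = {\<omega> \<in> space M. exp (s * x) \<le> exp (s * X \<omega>)}"
    using assms(3) by (auto simp: mult_le_cancel_left_neg)
  then have "cdf_rv M X x = prob {\<omega> \<in> space M. exp (s * x) \<le> exp (s * X \<omega>)}"
    unfolding cdf_rv_def by simp
  also have "\<dots> \<le> mgf M X s / exp (s * x)"
    unfolding mgf_def by (rule integral_Markov_inequality_measure[OF assms(2)]) auto
  finally show ?thesis
    by (simp add: exp_minus field_simps)
qed

lemma surv_rv_le_mgf:
  assumes [measurable]: "X \<in> borel_measurable M"
    and "integrable M (\<lambda>\<omega>. exp (s * X \<omega>))" and "0 \<le> s"
  shows "surv_rv M X x \<le> mgf M X s * exp (- s * x)"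
proof -
  have "surv_rv M X x \<le> prob {\<omega> \<in> space M. exp (s * x) \<le> exp (s * X \<omega>)}"
    unfolding surv_rv_eq_prob_greater[OF assms(1)]
    using assms(3) by (intro finite_measure_mono) (auto intro!: mult_left_mono)
  also have "\<dots> \<le> mgf M X s / exp (s * x)"
    unfolding mgf_def by (rule integral_Markov_inequality_measure[OF assms(2)]) auto
  finally show ?thesis
    by (simp add: exp_minus field_simps)
qed

lemma CIGF_le_g_bound_mgf:
  assumes [measurable]: "X \<in> borel_measurable M"
    and ends: "left_end M X = 0" "right_end M X = r" and "0 < r"
    and "s1 < 0" "0 \<le> s2"
    and mgf_finite: "integrable M (\<lambda>\<omega>. exp (s1 * X \<omega>))"
      "integrable M (\<lambda>\<omega>. exp (s2 * X \<omega>))"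
    and domain: "(a, b) \<in> CIGF_domain M X" and "0 \<le> a" "0 \<le> b"
  shows "CIGF M X a b \<le> g_bound r a b s1 s2 * mgf M X s1 powr a * mgf M X s2 powr b"
proof -
  let ?m1 = "mgf M X s1" and ?m2 = "mgf M X s2"
  have "0 < ?m1" "0 < ?m2"
    using mgf_finite by (auto intro: mgf_pos)
  have bound: "cdf_rv M X x powr a * surv_rv M X x powr b
      \<le> exp (- (a * s1 + b * s2) * x) * (?m1 powr a * ?m2 powr b)" for x
    unfolding exp_linear_combination_split using \<open>0 < ?m1\<close> \<open>0 < ?m2\<close> assms
    by (intro mult_mono powr_le_exp_bound cdf_rv_le_mgf surv_rv_le_mgf
        cdf_rv_nonneg surv_rv_nonneg) auto
  have "CIGF M X a b
      \<le> (LINT x:{0<..<r}|lborel. exp (- (a * s1 + b * s2) * x) * (?m1 powr a * ?m2 powr b))"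
    using domain bound unfolding CIGF_def CIGF_domain_def ends
    by (intro set_integral_mono set_integrable_mult_left set_integrable_exp_Ioo) auto
  then show ?thesis
    unfolding set_integral_exp_Ioo_eq_g_bound[OF \<open>0 < r\<close>] by (simp add: mult_ac)
qed

lemma CIGF_ge_g_bound_mgf:
  assumes [measurable]: "X \<in> borel_measurable M" and "AE \<omega> in M. 0 \<le> X \<omega>"
    and ends: "left_end M X = 0" "right_end M X = r" and "0 < r"
    and "s1 < 0" "0 \<le> s2"
    and mgf_finite: "integrable M (\<lambda>\<omega>. exp (s1 * X \<omega>))"
      "integrable M (\<lambda>\<omega>. exp (s2 * X \<omega>))"
    and domain: "(a, b) \<in> CIGF_domain M X" and "a \<le> 0" "b \<le> 0"
  shows "g_bound r a b s1 s2 * mgf M X s1 powr a * mgf M X s2 powr b \<le> CIGF M X a b"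
proof -
  let ?m1 = "mgf M X s1" and ?m2 = "mgf M X s2"
  have "0 < ?m1" "0 < ?m2"
    using mgf_finite by (auto intro: mgf_pos)
  have bound: "exp (- (a * s1 + b * s2) * x) * (?m1 powr a * ?m2 powr b)
      \<le> cdf_rv M X x powr a * surv_rv M X x powr b" if "x \<in> {0<..<r}" for x
    unfolding exp_linear_combination_split using \<open>0 < ?m1\<close> \<open>0 < ?m2\<close> that assms
    by (intro mult_mono exp_bound_le_powr_nonpos cdf_rv_le_mgf surv_rv_le_mgf
        cdf_rv_pos_above_left_end surv_rv_pos_below_right_end) auto
  have "(LINT x:{0<..<r}|lborel. exp (- (a * s1 + b * s2) * x) * (?m1 powr a * ?m2 powr b))
      \<le> CIGF M X a b"
    using domain bound unfolding CIGF_def CIGF_domain_def ends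
    by (intro set_integral_mono set_integrable_mult_left set_integrable_exp_Ioo) auto
  then show ?thesis
    unfolding set_integral_exp_Ioo_eq_g_bound[OF \<open>0 < r\<close>] by (simp add: mult_ac)
qed

end

theorem proposition4:
  fixes M :: "'a measure" and X :: "'a \<Rightarrow> real" and r s0 :: real
  assumes "prob_space M"
    and "X \<in> borel_measurable M"
    and "AE \<omega> in M. X \<omega> \<ge> 0"
    and "left_end M X = 0" and "right_end M X = r"
    and "0 < r"
    and "0 < s0"
    and "\<And>s. s \<in> {-s0<..<s0} \<Longrightarrow> integrable M (\<lambda>\<omega>. exp (s * X \<omega>))"
  shows "(\<forall>s1 s2 a b. s1 \<in> {-s0<..<0} \<and> s2 \<in> {0<..<s0} \<and> (a, b) \<in> CIGF_domain M X
            \<and> a > 0 \<and> b > 0 \<longrightarrow>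
            CIGF M X a b \<le> g_bound r a b s1 s2 * mgf M X s1 powr a * mgf M X s2 powr b)
       \<and> (\<forall>s1 s2 a b. s1 \<in> {-s0<..<0} \<and> s2 \<in> {0<..<s0} \<and> (a, b) \<in> CIGF_domain M X
            \<and> a < 0 \<and> b < 0 \<longrightarrow>
            CIGF M X a b \<ge> g_bound r a b s1 s2 * mgf M X s1 powr a * mgf M X s2 powr b)"
proof -
  interpret prob_space M
    by fact
  have mgf_finite: "integrable M (\<lambda>\<omega>. exp (s * X \<omega>))" if "s \<in> {-s0<..<0} \<union> {0<..<s0}" for s
    using assms(8) that by auto
  show ?thesis
    using assms(2-6) mgf_finite
    by (auto intro!: CIGF_le_g_bound_mgf CIGF_ge_g_bound_mgf)
qed

end
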